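(* Suppose $\phi_1,\phi_2$ satisfy the Doubrov–Ferapontov modified heavenly hierarchy $(\Phi_1\wedge\Phi_2)_-=0$. Define the vector fields $$T_n=\partial_{t_n}-\begin{vmatrix}\phi_{1,t_n}&\phi_{2,t_n}\\ \phi_{1,y}&\phi_{2,y}\end{vmatrix}_+\partial_x-\begin{vmatrix}\phi_{2,t_n}&\phi_{1,t_n}\\ \phi_{2,x}&\phi_{1,x}\end{vmatrix}_+\partial_y,\qquad Z_j=\lambda\partial_{z_j}-\begin{vmatrix}\lambda\phi_{1,z_j}&\lambda\phi_{2,z_j}\\ \phi_{1,y}&\phi_{2,y}\end{vmatrix}_+\partial_x-\begin{vmatrix}\lambda\phi_{2,z_j}&\lambda\phi_{1,z_j}\\ \phi_{2,x}&\phi_{1,x}\end{vmatrix}_+\partial_y$$ for $n,j\ge1$. Then $T_n\vec\phi=Z_j\vec\phi=0$ for all $n,j$, and the vector fields pairwise commute: $[T_n,T_s]=0$, $[T_n,Z_j]=0$, $[Z_i,Z_j]=0$ for all $n,s,i,j\ge1$.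
   Context: Independent variables are $x,y$ and two infinite families $t_1,t_2,\dots$ and $z_1,z_2,\dots$; write $t:=t_1$, $z:=z_1$. $\lambda$ is a formal spectral parameter. For a formal Laurent series $\sum_n a_n\lambda^n$, set $(\sum_n a_n\lambda^n)_+=\sum_{n\ge0}a_n\lambda^n$ and $(\sum_n a_n\lambda^n)_-=\sum_{n<0}a_n\lambda^n$; for a determinant, $|\cdot|_+$ denotes the $(\cdot)_+$ part of the determinant. Consider formal series $\phi_1=-y+\sum_{j\ge2}z_j\lambda^{j-1}+\sum_{k\ge1}g_k\lambda^{-k}$, $\phi_2=x+t_1\lambda+\sum_{n\ge2}t_n\lambda^n+\sum_{m\ge1}f_m\lambda^{-m}$, where $g_k,f_m$ are functions of $(x,y,t_1,t_2,\dots,z_1,z_2,\dots)$, and $\vec\phi=(\phi_1,\phi_2)^T$. Define the 1-forms $\Phi_i=\phi_{i,x}dx+\phi_{i,y}dy+\sum_{n\ge1}\phi_{i,t_n}dt_n+\lambda\sum_{j\ge1}\phi_{i,z_j}dz_j$ ($i=1,2$). The Doubrov–Ferapontov modified heavenly hierarchy is $(\Phi_1\wedge\Phi_2)_-=0$, meaning that the negative-power part (in $\lambda$) of the coefficient of every basis 2-form vanishes; explicitly, for variables $a,b$ among $x,y,t_n,z_j$, the coefficient of $da\wedge db$ is $\lambda^{\epsilon}\,\partial(\phi_1,\phi_2)/\partial(a,b)$, where $\partial(\phi_1,\phi_2)/\partial(a,b)=\phi_{1,a}\phi_{2,b}-\phi_{1,b}\phi_{2,a}$ and $\epsilon$ is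 the number of $z$-variables among $a,b$. Subscripts denote partial derivatives. *)

theory Defs
  imports "HOL-Analysis.Analysis"
begin

text \<open>Independent variables: x, y, t_n (n >= 1), z_j (j >= 1).
  The constructors T 0 and Z 0 exist in the type but are never used as
  hierarchy variables (they are inert spectator coordinates).\<close>
datatype var = X | Y | T nat | Z nat

definition valid_var :: "var \<Rightarrow> bool" where
  "valid_var v \<longleftrightarrow> (case v of T n \<Rightarrow> n \<ge> 1 | Z j \<Rightarrow> j \<ge> 1 | _ \<Rightarrow> True)"

definition is_z :: "var \<Rightarrow> bool" where
  "is_z v \<longleftrightarrow> (case v of Z _ \<Rightarrow> True | _ \<Rightarrow> False)"

text \<open>Functions of the independent variables, and formal series in lambda:
  a series S has coefficient S i of lambda^i (i :: int).\<close>
type_synonym fn = "(var \<Rightarrow> real) \<Rightarrow> real"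
type_synonym ser = "int \<Rightarrow> fn"

definition coord :: "var \<Rightarrow> fn" where
  "coord v = (\<lambda>p. p v)"

definition pd :: "var \<Rightarrow> fn \<Rightarrow> fn" where
  "pd v F = (\<lambda>p. deriv (\<lambda>s. F (p(v := s))) (p v))"

fun pds :: "var list \<Rightarrow> fn \<Rightarrow> fn" where
  "pds [] F = F"
| "pds (v # vs) F = pd v (pds vs F)"

definition smooth :: "fn \<Rightarrow> bool" where
  "smooth F \<longleftrightarrow>
     (\<forall>vs v p. (\<lambda>s. pds vs F (p(v := s))) differentiable (at (p v))) \<and>
     (\<forall>vs a b. pd a (pd b (pds vs F)) = pd b (pd a (pds vs F)))"

definition zero_fn :: fn where "zero_fn = (\<lambda>_. 0)"
definition zero_ser :: ser where "zero_ser = (\<lambda>_. zero_fn)"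
definition one_ser :: ser where "one_ser = (\<lambda>i. if i = 0 then (\<lambda>_. 1) else zero_fn)"

definition spd :: "var \<Rightarrow> ser \<Rightarrow> ser" where
  "spd v S = (\<lambda>i. pd v (S i))"

definition sadd :: "ser \<Rightarrow> ser \<Rightarrow> ser" where
  "sadd S R = (\<lambda>i p. S i p + R i p)"

definition sneg :: "ser \<Rightarrow> ser" where
  "sneg S = (\<lambda>i p. - S i p)"

definition ssub :: "ser \<Rightarrow> ser \<Rightarrow> ser" where
  "ssub S R = (\<lambda>i p. S i p - R i p)"

text \<open>Cauchy product; the sum ranges over the (finite, for series with
  finitely many positive powers) set of contributing indices.\<close>
definition smult :: "ser \<Rightarrow> ser \<Rightarrow> ser" where
  "smult S R = (\<lambda>n p. \<Sum>k \<in> {k. S k \<noteq> zero_fn \<and> R (n - k) \<noteq> zero_fn}. S k p * R (n - k) p)"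

definition lampow :: "nat \<Rightarrow> ser \<Rightarrow> ser" where
  "lampow m S = (\<lambda>i. S (i - int m))"

definition pos_part :: "ser \<Rightarrow> ser" where
  "pos_part S = (\<lambda>i. if i \<ge> 0 then S i else zero_fn)"

definition neg_part :: "ser \<Rightarrow> ser" where
  "neg_part S = (\<lambda>i. if i < 0 then S i else zero_fn)"

definition sdet :: "ser \<Rightarrow> ser \<Rightarrow> ser \<Rightarrow> ser \<Rightarrow> ser" where
  "sdet a b c d = ssub (smult a d) (smult b c)"

text \<open>phi_1 = -y + sum_{j>=2} z_j lambda^(j-1) + sum_{k>=1} g_k lambda^(-k)\<close>
definition phi1 :: "(nat \<Rightarrow> fn) \<Rightarrow> ser" where
  "phi1 g = (\<lambda>i. if i = 0 then (\<lambda>p. - p Y)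
                 else if i > 0 then coord (Z (nat i + 1))
                 else g (nat (- i)))"

text \<open>phi_2 = x + sum_{n>=1} t_n lambda^n + sum_{m>=1} f_m lambda^(-m)\<close>
definition phi2 :: "(nat \<Rightarrow> fn) \<Rightarrow> ser" where
  "phi2 f = (\<lambda>i. if i = 0 then coord X
                 else if i > 0 then coord (T (nat i))
                 else f (nat (- i)))"

text \<open>Coefficient of da /\ db in Phi_1 /\ Phi_2:
  lambda^eps * d(phi1,phi2)/d(a,b), eps = number of z-variables among a,b.\<close>
definition wedge_coeff :: "ser \<Rightarrow> ser \<Rightarrow> var \<Rightarrow> var \<Rightarrow> ser" where
  "wedge_coeff P1 P2 a b =
     lampow ((if is_z a then 1 else 0) + (if is_z b then 1 else 0))
       (ssub (smult (spd a P1) (spd b P2)) (smult (spd b P1) (spd a P2)))"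

definition DF_hierarchy :: "(nat \<Rightarrow> fn) \<Rightarrow> (nat \<Rightarrow> fn) \<Rightarrow> bool" where
  "DF_hierarchy g f \<longleftrightarrow>
     (\<forall>a b. valid_var a \<longrightarrow> valid_var b \<longrightarrow>
        neg_part (wedge_coeff (phi1 g) (phi2 f) a b) = zero_ser)"

text \<open>Vector fields with coefficients that are series in lambda:
  V u is the coefficient of the partial derivative in direction u.\<close>
type_synonym vfield = "var \<Rightarrow> ser"

definition vf_app :: "vfield \<Rightarrow> ser \<Rightarrow> ser" where
  "vf_app V S = (\<lambda>n p. \<Sum>u \<in> {u. V u \<noteq> zero_ser}. smult (V u) (spd u S) n p)"

definition vf_bracket :: "vfield \<Rightarrow> vfield \<Rightarrow> vfield" where
  "vf_bracket V W = (\<lambda>u. ssub (vf_app V (W u)) (vf_app W (V u)))"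

definition zero_vf :: vfield where "zero_vf = (\<lambda>_. zero_ser)"

definition Tvf :: "(nat \<Rightarrow> fn) \<Rightarrow> (nat \<Rightarrow> fn) \<Rightarrow> nat \<Rightarrow> vfield" where
  "Tvf g f n = (let P1 = phi1 g; P2 = phi2 f; w = T n in
     (\<lambda>u. if u = w then one_ser
          else if u = X then sneg (pos_part (sdet (spd w P1) (spd w P2) (spd Y P1) (spd Y P2)))
          else if u = Y then sneg (pos_part (sdet (spd w P2) (spd w P1) (spd X P2) (spd X P1)))
          else zero_ser))"

definition Zvf :: "(nat \<Rightarrow> fn) \<Rightarrow> (nat \<Rightarrow> fn) \<Rightarrow> nat \<Rightarrow> vfield" where
  "Zvf g f j = (let P1 = phi1 g; P2 = phi2 f; w = Z j in
     (\<lambda>u. if u = w then lampow 1 one_ser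
          else if u = X then sneg (pos_part (sdet (lampow 1 (spd w P1)) (lampow 1 (spd w P2)) (spd Y P1) (spd Y P2)))
          else if u = Y then sneg (pos_part (sdet (lampow 1 (spd w P2)) (lampow 1 (spd w P1)) (spd X P2) (spd X P1)))
          else zero_ser))"

end

theory Submission
  imports Defs "HOL-Library.Function_Algebras" "HOL-Computational_Algebra.Formal_Laurent_Series"
begin

text \<open>View the series in \<open>\<lambda>\<close> as formal Laurent series with coefficients in the ring of
  functions. The hierarchy equation for the pair \<open>(x, y)\<close> says that the Jacobian
  \<open>\<phi>1_x \<phi>2_y - \<phi>1_y \<phi>2_x\<close> equals \<open>1\<close>, and the equations for the pairs \<open>(t_n, x), (t_n, y),
  (z_j, x), (z_j, y)\<close> say that the projections \<open>(\<dots>)_+\<close> in the definitions of \<open>T_n\<close> and \<open>Z_j\<close>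
  change nothing. Each field is then \<open>c (\<partial>_w - a \<partial>_x - b \<partial>_y)\<close> with a constant \<open>c\<close> and with
  \<open>(a, b)\<close> given by Cramer's rule, so it annihilates \<open>\<phi>1\<close> and \<open>\<phi>2\<close>. The bracket of two
  fields annihilating \<open>\<phi>1, \<phi>2\<close> again annihilates them, because mixed partials commute; as
  the \<open>c\<close> are constant the bracket has only \<open>\<partial>_x, \<partial>_y\<close> components, and these vanish because
  the Jacobian is invertible.\<close>

section \<open>Partial derivatives\<close>

definition coordwise_differentiable :: "fn \<Rightarrow> bool" where
  "coordwise_differentiable F \<longleftrightarrow> (\<forall>v p. (\<lambda>s. F (p(v := s))) differentiable (at (p v)))"

lemma has_real_derivative_pd:
  assumes "coordwise_differentiable F"
  shows "((\<lambda>s. F (p(v := s))) has_real_derivative pd v F p) (at (p v))"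
  using assms DERIV_deriv_iff_real_differentiable
  unfolding coordwise_differentiable_def pd_def by blast

lemma pd_const [simp]: "pd v (\<lambda>_. c) = (\<lambda>_. 0)"
  by (simp add: pd_def)

lemma pd_zero [simp]: "pd v 0 = 0"
  by (simp add: pd_def zero_fun_def)

lemma coord_fun_upd: "(\<lambda>s. coord w (p(v := s))) = (if v = w then (\<lambda>s. s) else (\<lambda>_. p w))"
  by (auto simp: coord_def)

lemma pd_coord: "pd v (coord w) = (\<lambda>_. if v = w then 1 else 0)"
  by (auto simp: pd_def coord_fun_upd)

lemma pd_add:
  assumes "coordwise_differentiable F" "coordwise_differentiable G"
  shows "pd v (F + G) = pd v F + pd v G"
  by (rule ext, unfold plus_fun_apply pd_def[of v "F + G"])
    (intro DERIV_imp_deriv DERIV_add has_real_derivative_pd assms)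

lemma pd_mult:
  assumes "coordwise_differentiable F" "coordwise_differentiable G"
  shows "pd v (F * G) = pd v F * G + F * pd v G"
proof
  fix p
  have "((\<lambda>s. F (p(v := s)) * G (p(v := s))) has_real_derivative pd v F p * G p + F p * pd v G p)
      (at (p v))"
    using DERIV_mult'[OF has_real_derivative_pd[OF assms(1), of p v]
        has_real_derivative_pd[OF assms(2), of p v]]
    by (simp add: algebra_simps)
  then show "pd v (F * G) p = (pd v F * G + F * pd v G) p"
    unfolding pd_def[of v "F * G"] by (simp add: DERIV_imp_deriv)
qed

lemma pd_uminus:
  assumes "coordwise_differentiable F"
  shows "pd v (- F) = - pd v F"
proof
  fix p
  have "((\<lambda>s. - F (p(v := s))) has_real_derivative - pd v F p) (at (p v))"
    by (intro DERIV_minus has_real_derivative_pd assms)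
  then show "pd v (- F) p = (- pd v F) p"
    unfolding pd_def[of v "- F"] by (simp add: DERIV_imp_deriv)
qed

lemma coordwise_differentiable_const: "coordwise_differentiable (\<lambda>_. c)"
  by (simp add: coordwise_differentiable_def)

lemma coordwise_differentiable_coord: "coordwise_differentiable (coord w)"
  by (simp add: coordwise_differentiable_def coord_fun_upd)

lemma coordwise_differentiable_add:
  "coordwise_differentiable F \<Longrightarrow> coordwise_differentiable G \<Longrightarrow> coordwise_differentiable (F + G)"
  by (auto simp: coordwise_differentiable_def intro!: differentiable_add)

lemma coordwise_differentiable_mult:
  "coordwise_differentiable F \<Longrightarrow> coordwise_differentiable G \<Longrightarrow> coordwise_differentiable (F * G)"
  by (auto simp: coordwise_differentiable_def intro!: differentiable_mult)

lemma coordwise_differentiable_uminus: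
  "coordwise_differentiable F \<Longrightarrow> coordwise_differentiable (- F)"
  by (auto simp: coordwise_differentiable_def fun_Compl_def intro!: differentiable_minus)

lemma coordwise_differentiable_sum:
  "(\<And>x. x \<in> A \<Longrightarrow> coordwise_differentiable (h x)) \<Longrightarrow> coordwise_differentiable (\<Sum>x\<in>A. h x)"
  by (induction A rule: infinite_finite_induct)
    (auto simp: zero_fun_def coordwise_differentiable_const intro: coordwise_differentiable_add)

lemma pd_sum:
  "(\<And>x. x \<in> A \<Longrightarrow> coordwise_differentiable (h x)) \<Longrightarrow> pd v (\<Sum>x\<in>A. h x) = (\<Sum>x\<in>A. pd v (h x))"
  by (induction A rule: infinite_finite_induct)
    (auto simp: pd_add coordwise_differentiable_sum)

section \<open>The algebra generated by a smooth family and the coordinates\<close>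

definition smooth_family :: "fn set \<Rightarrow> bool" where
  "smooth_family B \<longleftrightarrow>
     (\<forall>F\<in>B. coordwise_differentiable F \<and> (\<forall>v. pd v F \<in> B) \<and> (\<forall>a b. pd a (pd b F) = pd b (pd a F)))"

text \<open>Smoothness is assumed only for the \<open>g_k\<close> and \<open>f_m\<close>; this closure carries it over to the
  polynomial expressions in them that make up the coefficients of the vector fields.\<close>

inductive coord_algebra :: "fn set \<Rightarrow> fn \<Rightarrow> bool" for B where
  generator: "F \<in> B \<Longrightarrow> coord_algebra B F"
| coord: "coord_algebra B (coord w)"
| const: "coord_algebra B (\<lambda>_. c)"
| add: "coord_algebra B F \<Longrightarrow> coord_algebra B G \<Longrightarrow> coord_algebra B (F + G)"
| mult: "coord_algebra B F \<Longrightarrow> coord_algebra B G \<Longrightarrow> coord_algebra B (F * G)"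
| uminus: "coord_algebra B F \<Longrightarrow> coord_algebra B (- F)"

lemma coord_algebra_zero: "coord_algebra B 0"
  unfolding zero_fun_def by (rule coord_algebra.const)

lemma coord_algebra_one: "coord_algebra B 1"
  unfolding one_fun_def by (rule coord_algebra.const)

lemma coord_algebra_diff: "coord_algebra B F \<Longrightarrow> coord_algebra B G \<Longrightarrow> coord_algebra B (F - G)"
  unfolding diff_conv_add_uminus by (intro coord_algebra.add coord_algebra.uminus)

lemma coord_algebra_sum: "(\<And>x. x \<in> A \<Longrightarrow> coord_algebra B (h x)) \<Longrightarrow> coord_algebra B (\<Sum>x\<in>A. h x)"
proof (induction A rule: infinite_finite_induct)
  case (insert x A)
  then show ?case unfolding sum.insert[OF insert(1,2)] by (blast intro: coord_algebra.add)
qed (simp_all add: coord_algebra_zero)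

context
  fixes B :: "fn set"
  assumes smooth: "smooth_family B"
begin

lemma coord_algebra_differentiable: "coord_algebra B F \<Longrightarrow> coordwise_differentiable F"
proof (induction rule: coord_algebra.induct)
  case (generator F)
  then show ?case using smooth by (simp add: smooth_family_def)
qed (blast intro: coordwise_differentiable_const coordwise_differentiable_coord
       coordwise_differentiable_add coordwise_differentiable_mult coordwise_differentiable_uminus)+

lemma coord_algebra_pd: "coord_algebra B F \<Longrightarrow> coord_algebra B (pd v F)"
proof (induction rule: coord_algebra.induct)
  case (generator F)
  then show ?case using smooth by (auto simp: smooth_family_def intro: coord_algebra.generator)
next
  case (coord w)
  show ?case unfolding pd_coord by (rule coord_algebra.const)
next
  case (const c)
  show ?case unfolding pd_const by (rule coord_algebra.const)
next
  case (add F G)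
  show ?case
    unfolding pd_add[OF add.hyps[THEN coord_algebra_differentiable]] using add.IH by (rule coord_algebra.add)
next
  case (mult F G)
  show ?case
    unfolding pd_mult[OF mult.hyps[THEN coord_algebra_differentiable]]
    by (intro coord_algebra.add coord_algebra.mult mult.IH mult.hyps)
next
  case (uminus F)
  show ?case
    unfolding pd_uminus[OF uminus.hyps[THEN coord_algebra_differentiable]] using uminus.IH
    by (rule coord_algebra.uminus)
qed

lemma coord_algebra_pd_commute: "coord_algebra B F \<Longrightarrow> pd a (pd b F) = pd b (pd a F)"
proof (induction rule: coord_algebra.induct)
  case (generator F)
  then show ?case using smooth by (auto simp: smooth_family_def)
next
  case (coord w)
  show ?case by (simp add: pd_coord)
next
  case (const c)
  show ?case by simp
next
  case (add F G)
  have d: "coordwise_differentiable F" "coordwise_differentiable G"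
    "coordwise_differentiable (pd b F)" "coordwise_differentiable (pd b G)"
    "coordwise_differentiable (pd a F)" "coordwise_differentiable (pd a G)"
    using add.hyps by (auto intro: coord_algebra_differentiable coord_algebra_pd)
  show ?case
    unfolding pd_add[OF d(1,2)] pd_add[OF d(3,4)] pd_add[OF d(5,6)] add.IH ..
next
  case (mult F G)
  have d: "coordwise_differentiable F" "coordwise_differentiable G"
    "coordwise_differentiable (pd a F)" "coordwise_differentiable (pd b F)"
    "coordwise_differentiable (pd a G)" "coordwise_differentiable (pd b G)"
    using mult.hyps by (auto intro: coord_algebra_differentiable coord_algebra_pd)
  have dd: "coordwise_differentiable (pd b F * G)" "coordwise_differentiable (F * pd b G)"
    "coordwise_differentiable (pd a F * G)" "coordwise_differentiable (F * pd a G)"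
    using d by (auto intro: coordwise_differentiable_mult)
  show ?case
    unfolding pd_mult[OF d(1,2)] pd_add[OF dd(1,2)] pd_add[OF dd(3,4)] pd_mult[OF d(4,2)]
      pd_mult[OF d(1,6)] pd_mult[OF d(3,2)] pd_mult[OF d(1,5)] mult.IH
    by (simp only: algebra_simps)
next
  case (uminus F)
  have d: "coordwise_differentiable F" "coordwise_differentiable (pd b F)"
    "coordwise_differentiable (pd a F)"
    using uminus.hyps by (auto intro: coord_algebra_differentiable coord_algebra_pd)
  show ?case
    unfolding pd_uminus[OF d(1)] pd_uminus[OF d(2)] pd_uminus[OF d(3)] uminus.IH ..
qed

end

section \<open>Laurent series with function coefficients\<close>

notation fls_nth (infixl \<open>$$\<close> 75)

definition fls_pd :: "var \<Rightarrow> fn fls \<Rightarrow> fn fls" where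
  "fls_pd v F = Abs_fls (\<lambda>i. pd v (F $$ i))"

definition coord_algebra_fls :: "fn set \<Rightarrow> fn fls \<Rightarrow> bool" where
  "coord_algebra_fls B F \<longleftrightarrow> (\<forall>i. coord_algebra B (F $$ i))"

lemma fls_pd_nth [simp]: "fls_pd v F $$ i = pd v (F $$ i)"
proof -
  obtain N where "\<forall>n<N. F $$ n = 0" by (rule fls_nth_vanishes_belowE)
  then have "\<forall>n<N. pd v (F $$ n) = 0" by simp
  then show ?thesis unfolding fls_pd_def by (rule nth_Abs_fls_lower_bound)
qed

lemma coord_algebra_fls_nth: "coord_algebra_fls B F \<Longrightarrow> coord_algebra B (F $$ i)"
  unfolding coord_algebra_fls_def by blast

lemma coord_algebra_fls_zero: "coord_algebra_fls B 0"
  unfolding coord_algebra_fls_def by (simp add: coord_algebra_zero)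

lemma coord_algebra_fls_one: "coord_algebra_fls B 1"
  unfolding coord_algebra_fls_def by (simp add: coord_algebra_zero coord_algebra_one)

lemma coord_algebra_fls_uminus: "coord_algebra_fls B F \<Longrightarrow> coord_algebra_fls B (- F)"
  unfolding coord_algebra_fls_def fls_uminus_nth by (blast intro: coord_algebra.uminus)

lemma coord_algebra_fls_diff:
  "coord_algebra_fls B F \<Longrightarrow> coord_algebra_fls B G \<Longrightarrow> coord_algebra_fls B (F - G)"
  unfolding coord_algebra_fls_def fls_minus_nth by (blast intro: coord_algebra_diff)

lemma coord_algebra_fls_mult:
  "coord_algebra_fls B F \<Longrightarrow> coord_algebra_fls B G \<Longrightarrow> coord_algebra_fls B (F * G)"
  unfolding coord_algebra_fls_def fls_times_nth(2) by (blast intro: coord_algebra_sum coord_algebra.mult)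

lemma coord_algebra_fls_shift: "coord_algebra_fls B F \<Longrightarrow> coord_algebra_fls B (fls_shift m F)"
  unfolding coord_algebra_fls_def fls_shift_nth by blast

lemma coord_algebra_fls_sum:
  "(\<And>x. x \<in> A \<Longrightarrow> coord_algebra_fls B (h x)) \<Longrightarrow> coord_algebra_fls B (\<Sum>x\<in>A. h x)"
  unfolding coord_algebra_fls_def fls_nth_sum by (blast intro: coord_algebra_sum)

lemma fls_pd_zero [simp]: "fls_pd v 0 = 0"
  by (rule fls_eqI) simp

lemma fls_pd_one [simp]: "fls_pd v 1 = 0"
  by (rule fls_eqI) (simp add: one_fun_def zero_fun_def)

lemma fls_pd_shift: "fls_pd v (fls_shift m F) = fls_shift m (fls_pd v F)"
  by (rule fls_eqI) simp

lemma fls_pd_X_inv [simp]: "fls_pd v fls_X_inv = 0"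
  by (simp add: fls_X_inv_conv_shift_1 fls_pd_shift)

lemma coord_algebra_fls_X_inv: "coord_algebra_fls B fls_X_inv"
  by (simp add: fls_X_inv_conv_shift_1 coord_algebra_fls_shift coord_algebra_fls_one)

lemma fls_times_nth_bounds:
  fixes F G :: "'a::comm_ring fls"
  assumes "\<forall>i<a. F $$ i = 0" and "\<forall>j<b. G $$ j = 0"
  shows "(F * G) $$ n = (\<Sum>i=a..n-b. F $$ i * G $$ (n - i))"
proof -
  define S where "S = {min a (fls_subdegree F) .. n - min b (fls_subdegree G)}"
  have vanish: "F $$ i * G $$ (n - i) = 0"
    if "i < a \<or> i < fls_subdegree F \<or> i > n - b \<or> i > n - fls_subdegree G" for i
    using that assms by (auto simp: fls_eq0_below_subdegree)
  have "(F * G) $$ n = (\<Sum>i=fls_subdegree F..n - fls_subdegree G. F $$ i * G $$ (n - i))"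
    by (rule fls_times_nth(2))
  also have "\<dots> = (\<Sum>i\<in>S. F $$ i * G $$ (n - i))"
    by (rule sum.mono_neutral_left) (auto simp: S_def intro!: vanish)
  also have "\<dots> = (\<Sum>i=a..n-b. F $$ i * G $$ (n - i))"
    by (rule sum.mono_neutral_right) (auto simp: S_def intro!: vanish)
  finally show ?thesis .
qed

context
  fixes B :: "fn set"
  assumes smooth: "smooth_family B"
begin

lemma fls_pd_add:
  assumes "coord_algebra_fls B F" "coord_algebra_fls B G"
  shows "fls_pd v (F + G) = fls_pd v F + fls_pd v G"
  by (rule fls_eqI) (simp add: pd_add coord_algebra_differentiable[OF smooth]
      coord_algebra_fls_nth assms)

lemma fls_pd_sum:
  "(\<And>x. x \<in> A \<Longrightarrow> coord_algebra_fls B (h x)) \<Longrightarrow> fls_pd v (\<Sum>x\<in>A. h x) = (\<Sum>x\<in>A. fls_pd v (h x))"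
proof (induction A rule: infinite_finite_induct)
  case (insert x A)
  then show ?case by (simp add: fls_pd_add coord_algebra_fls_sum)
qed simp_all

lemma fls_pd_mult:
  assumes F: "coord_algebra_fls B F" and G: "coord_algebra_fls B G"
  shows "fls_pd v (F * G) = fls_pd v F * G + F * fls_pd v G"
proof (rule fls_eqI)
  fix n
  define a where "a = fls_subdegree F"
  define b where "b = fls_subdegree G"
  have Fa: "\<forall>i<a. F $$ i = 0" "\<forall>i<a. fls_pd v F $$ i = 0" by (simp_all add: a_def)
  have Gb: "\<forall>i<b. G $$ i = 0" "\<forall>i<b. fls_pd v G $$ i = 0" by (simp_all add: b_def)
  have d: "coordwise_differentiable (F $$ i)" "coordwise_differentiable (G $$ i)" for i
    using F G by (simp_all add: coord_algebra_differentiable[OF smooth] coord_algebra_fls_nth)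
  have "fls_pd v (F * G) $$ n = pd v (\<Sum>i=a..n-b. F $$ i * G $$ (n - i))"
    by (simp only: fls_pd_nth fls_times_nth_bounds[OF Fa(1) Gb(1)])
  also have "\<dots> = (\<Sum>i=a..n-b. fls_pd v F $$ i * G $$ (n - i) + F $$ i * fls_pd v G $$ (n - i))"
    by (simp add: pd_sum pd_mult d coordwise_differentiable_mult)
  also have "\<dots> = (fls_pd v F * G + F * fls_pd v G) $$ n"
    by (simp only: fls_plus_nth fls_times_nth_bounds[OF Fa(2) Gb(1)]
        fls_times_nth_bounds[OF Fa(1) Gb(2)] sum.distrib)
  finally show "fls_pd v (F * G) $$ n = (fls_pd v F * G + F * fls_pd v G) $$ n" .
qed

end

section \<open>Series in \<open>\<lambda>\<close> as Laurent series\<close>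

text \<open>The series of the hierarchy have finitely many positive powers of \<open>\<lambda>\<close>, whereas formal
  Laurent series have finitely many negative powers; so coefficient \<open>n\<close> of a series is
  coefficient \<open>-n\<close> of the corresponding Laurent series, and \<open>\<lambda>\<close> corresponds to \<open>fls_X_inv\<close>.\<close>

definition ser_of_fls :: "fn fls \<Rightarrow> ser" where
  "ser_of_fls F = (\<lambda>n. F $$ (- n))"

definition fls_of_ser :: "ser \<Rightarrow> fn fls" where
  "fls_of_ser S = Abs_fls (\<lambda>i. S (- i))"

definition bounded_powers :: "ser \<Rightarrow> bool" where
  "bounded_powers S \<longleftrightarrow> (\<exists>N. \<forall>i>N. S i = zero_fn)"

lemma zero_fn_eq: "zero_fn = 0"
  by (simp add: zero_fn_def zero_fun_def)

lemma fls_of_ser_nth: "bounded_powers S \<Longrightarrow> fls_of_ser S $$ i = S (- i)"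
proof -
  assume "bounded_powers S"
  then obtain N where "\<forall>i>N. S i = zero_fn" unfolding bounded_powers_def by blast
  then have "\<forall>n< -N. S (- n) = 0" by (simp add: zero_fn_eq)
  then show ?thesis unfolding fls_of_ser_def by (rule nth_Abs_fls_lower_bound)
qed

lemma ser_of_fls_of_ser: "bounded_powers S \<Longrightarrow> ser_of_fls (fls_of_ser S) = S"
  by (simp add: ser_of_fls_def fls_of_ser_nth)

lemma zero_ser_eq: "zero_ser = ser_of_fls 0"
  by (simp add: zero_ser_def ser_of_fls_def zero_fn_eq)

lemma one_ser_eq: "one_ser = ser_of_fls 1"
  by (auto simp: one_ser_def ser_of_fls_def zero_fn_eq one_fun_def)

lemma ssub_ser_of_fls: "ssub (ser_of_fls F) (ser_of_fls G) = ser_of_fls (F - G)"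
  by (simp add: ssub_def ser_of_fls_def fun_diff_def)

lemma sneg_ser_of_fls: "sneg (ser_of_fls F) = ser_of_fls (- F)"
  by (simp add: sneg_def ser_of_fls_def fun_Compl_def)

lemma lampow_ser_of_fls: "lampow m (ser_of_fls F) = ser_of_fls (fls_shift (int m) F)"
  by (simp add: lampow_def ser_of_fls_def)

lemma spd_ser_of_fls: "spd v (ser_of_fls F) = ser_of_fls (fls_pd v F)"
  by (simp add: spd_def ser_of_fls_def)

lemma pos_part_ser_of_fls:
  "(\<And>n. n > 0 \<Longrightarrow> F $$ n = 0) \<Longrightarrow> pos_part (ser_of_fls F) = ser_of_fls F"
  by (auto simp: pos_part_def ser_of_fls_def zero_fn_eq)

lemma sum_fun_apply: "(\<Sum>x\<in>A. (h x :: 'a \<Rightarrow> 'b::comm_monoid_add)) p = (\<Sum>x\<in>A. h x p)"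
  by (induction A rule: infinite_finite_induct) auto

lemma smult_ser_of_fls: "Defs.smult (ser_of_fls F) (ser_of_fls G) = ser_of_fls (F * G)"
proof (intro ext)
  fix n :: int and p
  define K where "K = {k. ser_of_fls F k \<noteq> zero_fn \<and> ser_of_fls G (n - k) \<noteq> zero_fn}"
  define I where "I = {fls_subdegree F .. - n - fls_subdegree G}"
  define h where "h = (\<lambda>k. (F $$ (- k)) p * (G $$ (k - n)) p)"
  have "K \<subseteq> uminus ` I"
  proof
    fix k assume "k \<in> K"
    then have "F $$ (- k) \<noteq> 0" "G $$ (k - n) \<noteq> 0"
      unfolding K_def ser_of_fls_def zero_fn_eq by auto
    then have "- k \<in> I"
      using fls_subdegree_leI[of F "- k"] fls_subdegree_leI[of G "k - n"] by (auto simp: I_def)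
    then show "k \<in> uminus ` I" by force
  qed
  moreover have "h k = 0" if "k \<notin> K" for k
    using that by (auto simp: K_def h_def ser_of_fls_def zero_fn_eq)
  ultimately have "(\<Sum>k\<in>K. h k) = (\<Sum>k\<in>uminus ` I. h k)"
    by (intro sum.mono_neutral_left) (auto simp: I_def)
  also have "\<dots> = (\<Sum>i\<in>I. (F $$ i) p * (G $$ (- n - i)) p)"
    by (simp add: sum.reindex inj_on_def h_def) (simp only: diff_conv_add_uminus add.commute)
  finally show "Defs.smult (ser_of_fls F) (ser_of_fls G) n p = ser_of_fls (F * G) n p"
    by (simp add: smult_def K_def h_def ser_of_fls_def fls_times_nth(2)[of F G "- n"] I_def
        sum_fun_apply)
qed

section \<open>Vector fields with Laurent series coefficients\<close>

lemma vf_app_ser_of_fls: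
  assumes "finite U" and "\<And>u. u \<notin> U \<Longrightarrow> A u = 0"
    and "\<And>u. u \<in> U \<Longrightarrow> spd u S = ser_of_fls (Q u)"
  shows "vf_app (\<lambda>u. ser_of_fls (A u)) S = ser_of_fls (\<Sum>u\<in>U. A u * Q u)"
proof (intro ext)
  fix n p
  have "{u. ser_of_fls (A u) \<noteq> zero_ser} \<subseteq> U"
    using assms(2) by (auto simp: zero_ser_eq)
  moreover have "Defs.smult (ser_of_fls (A u)) (spd u S) n p = 0"
    if "ser_of_fls (A u) = zero_ser" for u
    using that by (simp add: smult_def zero_ser_def zero_fn_def)
  ultimately have "vf_app (\<lambda>u. ser_of_fls (A u)) S n p =
      (\<Sum>u\<in>U. Defs.smult (ser_of_fls (A u)) (spd u S) n p)"
    unfolding vf_app_def by (intro sum.mono_neutral_left assms(1)) auto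
  also have "\<dots> = (\<Sum>u\<in>U. ser_of_fls (A u * Q u) n p)"
    by (simp add: assms(3) smult_ser_of_fls)
  finally show "vf_app (\<lambda>u. ser_of_fls (A u)) S n p = ser_of_fls (\<Sum>u\<in>U. A u * Q u) n p"
    by (simp add: ser_of_fls_def fls_nth_sum sum_fun_apply)
qed

definition fls_bracket :: "var set \<Rightarrow> (var \<Rightarrow> fn fls) \<Rightarrow> (var \<Rightarrow> fn fls) \<Rightarrow> var \<Rightarrow> fn fls" where
  "fls_bracket U A B u = (\<Sum>v\<in>U. A v * fls_pd v (B u)) - (\<Sum>v\<in>U. B v * fls_pd v (A u))"

lemma vf_bracket_ser_of_fls:
  assumes "finite U" and "\<And>u. u \<notin> U \<Longrightarrow> A u = 0" and "\<And>u. u \<notin> U \<Longrightarrow> B u = 0"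
  shows "vf_bracket (\<lambda>u. ser_of_fls (A u)) (\<lambda>u. ser_of_fls (B u)) = (\<lambda>u. ser_of_fls (fls_bracket U A B u))"
  by (simp add: vf_bracket_def fls_bracket_def ssub_ser_of_fls spd_ser_of_fls
      vf_app_ser_of_fls[OF assms(1,2)] vf_app_ser_of_fls[OF assms(1,3)])

text \<open>If two fields annihilate a function with gradient \<open>P\<close>, so does their bracket: the
  second-order terms \<open>V_v W_u \<partial>_v P_u\<close> cancel because \<open>\<partial>_v P_u\<close> is symmetric in \<open>u, v\<close>.\<close>

lemma fls_bracket_annihilates:
  assumes smooth: "smooth_family B" and fin: "finite U"
    and algV: "\<And>u. u \<in> U \<Longrightarrow> coord_algebra_fls B (V u)"
    and algW: "\<And>u. u \<in> U \<Longrightarrow> coord_algebra_fls B (W u)"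
    and algP: "\<And>u. u \<in> U \<Longrightarrow> coord_algebra_fls B (P u)"
    and closed: "\<And>u v. u \<in> U \<Longrightarrow> v \<in> U \<Longrightarrow> fls_pd v (P u) = fls_pd u (P v)"
    and V: "(\<Sum>u\<in>U. V u * P u) = 0" and W: "(\<Sum>u\<in>U. W u * P u) = 0"
  shows "(\<Sum>u\<in>U. fls_bracket U V W u * P u) = 0"
proof -
  define first_order where
    "first_order R S = (\<Sum>v\<in>U. \<Sum>u\<in>U. R v * fls_pd v (S u) * P u)" for R S
  define second_order where
    "second_order R S = (\<Sum>v\<in>U. \<Sum>u\<in>U. R v * S u * fls_pd v (P u))" for R S
  have expand: "(\<Sum>v\<in>U. R v * fls_pd v (\<Sum>u\<in>U. S u * P u)) = first_order R S + second_order R S"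
    if "\<And>u. u \<in> U \<Longrightarrow> coord_algebra_fls B (S u)" for R S
  proof -
    have pd_sum: "fls_pd v (\<Sum>u\<in>U. S u * P u) = (\<Sum>u\<in>U. fls_pd v (S u) * P u + S u * fls_pd v (P u))"
      for v
    proof -
      have "fls_pd v (\<Sum>u\<in>U. S u * P u) = (\<Sum>u\<in>U. fls_pd v (S u * P u))"
        by (intro fls_pd_sum[OF smooth] coord_algebra_fls_mult that algP)
      also have "\<dots> = (\<Sum>u\<in>U. fls_pd v (S u) * P u + S u * fls_pd v (P u))"
        by (intro sum.cong refl fls_pd_mult[OF smooth] that algP)
      finally show ?thesis .
    qed
    show ?thesis
      unfolding pd_sum first_order_def second_order_def
      by (simp only: sum_distrib_left distrib_left sum.distrib mult.assoc)
  qed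
  have swap: "W v * V u * fls_pd v (P u) = V u * W v * fls_pd u (P v)" if "u \<in> U" "v \<in> U" for u v
    using closed[OF that] by (metis mult.commute)
  have symm: "second_order W V = second_order V W"
    unfolding second_order_def by (subst sum.swap) (intro sum.cong refl swap)
  have first_order_swap: "first_order R S = (\<Sum>u\<in>U. (\<Sum>v\<in>U. R v * fls_pd v (S u)) * P u)" for R S
    unfolding first_order_def sum_distrib_right by (rule sum.swap)
  have "(\<Sum>u\<in>U. fls_bracket U V W u * P u) = first_order V W - first_order W V"
    unfolding fls_bracket_def left_diff_distrib sum_subtractf first_order_swap ..
  also have "\<dots> = (\<Sum>v\<in>U. V v * fls_pd v (\<Sum>u\<in>U. W u * P u)) - (\<Sum>v\<in>U. W v * fls_pd v (\<Sum>u\<in>U. V u * P u))"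
    by (simp only: expand[OF algV] expand[OF algW] symm) simp
  also have "\<dots> = 0"
    by (simp add: V W)
  finally show ?thesis .
qed

section \<open>Solutions of the hierarchy\<close>

lemma minus_Y_eq: "(\<lambda>p. - p Y) = - coord Y"
  by (simp add: coord_def fun_Compl_def)

lemma pd_minus_Y: "pd v (\<lambda>p. - p Y) = (\<lambda>_. if v = Y then -1 else 0)"
  by (auto simp: minus_Y_eq pd_uminus[OF coordwise_differentiable_coord] pd_coord)

locale DF_solution =
  fixes g f :: "nat \<Rightarrow> fn"
  assumes smooth_g: "\<And>k. k \<ge> 1 \<Longrightarrow> smooth (g k)"
    and smooth_f: "\<And>m. m \<ge> 1 \<Longrightarrow> smooth (f m)"
    and hierarchy: "DF_hierarchy g f"
begin

definition coeff_derivatives :: "fn set" where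
  "coeff_derivatives = {pds vs (g k) | vs k. k \<ge> 1} \<union> {pds vs (f m) | vs m. m \<ge> 1}"

lemma smooth_family_coeff_derivatives: "smooth_family coeff_derivatives"
  unfolding smooth_family_def
proof
  fix F assume "F \<in> coeff_derivatives"
  then obtain vs h where F: "F = pds vs h" and "smooth h" and h: "\<And>ws. pds ws h \<in> coeff_derivatives"
    unfolding coeff_derivatives_def using smooth_g smooth_f by blast
  then show "coordwise_differentiable F \<and> (\<forall>v. pd v F \<in> coeff_derivatives) \<and>
      (\<forall>a b. pd a (pd b F) = pd b (pd a F))"
    using h[of "_ # vs"] by (simp add: smooth_def coordwise_differentiable_def)
qed

lemma pds_g_mem: "k \<ge> 1 \<Longrightarrow> pds vs (g k) \<in> coeff_derivatives"
  unfolding coeff_derivatives_def by blast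

lemma pds_f_mem: "m \<ge> 1 \<Longrightarrow> pds vs (f m) \<in> coeff_derivatives"
  unfolding coeff_derivatives_def by blast

lemma coord_algebra_phi1: "coord_algebra coeff_derivatives (phi1 g i)"
  using pds_g_mem[of _ "[]"] unfolding phi1_def minus_Y_eq by (auto intro: coord_algebra.intros)

lemma coord_algebra_phi2: "coord_algebra coeff_derivatives (phi2 f i)"
  using pds_f_mem[of _ "[]"] unfolding phi2_def by (auto intro: coord_algebra.intros)

lemma bounded_powers_spd_phi1: "bounded_powers (spd u (phi1 g))"
  unfolding bounded_powers_def
proof (intro exI[of _ "case u of Z j \<Rightarrow> int j | _ \<Rightarrow> 0"] allI impI)
  fix i :: int assume "(case u of Z j \<Rightarrow> int j | _ \<Rightarrow> 0) < i"
  then have "i > 0" "u \<noteq> Z (nat i + 1)" by (cases u; auto)+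
  then show "spd u (phi1 g) i = zero_fn"
    by (simp add: spd_def phi1_def pd_coord zero_fn_def)
qed

lemma bounded_powers_spd_phi2: "bounded_powers (spd u (phi2 f))"
  unfolding bounded_powers_def
proof (intro exI[of _ "case u of T n \<Rightarrow> int n | _ \<Rightarrow> 0"] allI impI)
  fix i :: int assume "(case u of T n \<Rightarrow> int n | _ \<Rightarrow> 0) < i"
  then have "i > 0" "u \<noteq> T (nat i)" by (cases u; auto)+
  then show "spd u (phi2 f) i = zero_fn"
    by (simp add: spd_def phi2_def pd_coord zero_fn_def)
qed

definition dphi1 :: "var \<Rightarrow> fn fls" where
  "dphi1 u = fls_of_ser (spd u (phi1 g))"

definition dphi2 :: "var \<Rightarrow> fn fls" where
  "dphi2 u = fls_of_ser (spd u (phi2 f))"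

lemma spd_phi1: "spd u (phi1 g) = ser_of_fls (dphi1 u)"
  by (simp add: dphi1_def ser_of_fls_of_ser bounded_powers_spd_phi1)

lemma spd_phi2: "spd u (phi2 f) = ser_of_fls (dphi2 u)"
  by (simp add: dphi2_def ser_of_fls_of_ser bounded_powers_spd_phi2)

lemma dphi1_nth: "dphi1 u $$ i = pd u (phi1 g (- i))"
  unfolding dphi1_def fls_of_ser_nth[OF bounded_powers_spd_phi1] by (simp add: spd_def)

lemma dphi2_nth: "dphi2 u $$ i = pd u (phi2 f (- i))"
  unfolding dphi2_def fls_of_ser_nth[OF bounded_powers_spd_phi2] by (simp add: spd_def)

lemma coord_algebra_fls_dphi1: "coord_algebra_fls coeff_derivatives (dphi1 u)"
  unfolding coord_algebra_fls_def dphi1_nth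
  by (blast intro: coord_algebra_pd[OF smooth_family_coeff_derivatives coord_algebra_phi1])

lemma coord_algebra_fls_dphi2: "coord_algebra_fls coeff_derivatives (dphi2 u)"
  unfolding coord_algebra_fls_def dphi2_nth
  by (blast intro: coord_algebra_pd[OF smooth_family_coeff_derivatives coord_algebra_phi2])

lemma fls_pd_dphi1: "fls_pd v (dphi1 u) = fls_pd u (dphi1 v)"
  by (rule fls_eqI) (simp add: dphi1_nth
      coord_algebra_pd_commute[OF smooth_family_coeff_derivatives coord_algebra_phi1])

lemma fls_pd_dphi2: "fls_pd v (dphi2 u) = fls_pd u (dphi2 v)"
  by (rule fls_eqI) (simp add: dphi2_nth
      coord_algebra_pd_commute[OF smooth_family_coeff_derivatives coord_algebra_phi2])

definition wedge :: "var \<Rightarrow> var \<Rightarrow> fn fls" where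
  "wedge a b = dphi1 a * dphi2 b - dphi1 b * dphi2 a"

lemma coord_algebra_fls_wedge: "coord_algebra_fls coeff_derivatives (wedge a b)"
  unfolding wedge_def
  by (intro coord_algebra_fls_diff coord_algebra_fls_mult coord_algebra_fls_dphi1 coord_algebra_fls_dphi2)

lemma wedge_coeff_eq:
  "wedge_coeff (phi1 g) (phi2 f) a b =
    ser_of_fls (fls_shift (int ((if is_z a then 1 else 0) + (if is_z b then 1 else 0))) (wedge a b))"
  by (simp only: wedge_coeff_def spd_phi1 spd_phi2 smult_ser_of_fls ssub_ser_of_fls
      lampow_ser_of_fls wedge_def)

lemma hierarchy_fls:
  assumes "valid_var a" "valid_var b" "n > 0"
  shows "fls_shift (int ((if is_z a then 1 else 0) + (if is_z b then 1 else 0))) (wedge a b) $$ n = 0"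
proof -
  have "neg_part (wedge_coeff (phi1 g) (phi2 f) a b) (- n) = zero_fn"
    using hierarchy assms unfolding DF_hierarchy_def by (simp add: zero_ser_def)
  then show ?thesis
    using assms(3) unfolding wedge_coeff_eq
    by (cases "is_z a"; cases "is_z b") (simp_all add: neg_part_def ser_of_fls_def zero_fn_eq add.commute)
qed

lemma dphi1_X_nth: "i < 1 \<Longrightarrow> dphi1 X $$ i = 0"
  by (auto simp: dphi1_nth phi1_def pd_minus_Y pd_coord zero_fun_def)

lemma dphi2_Y_nth: "i < 1 \<Longrightarrow> dphi2 Y $$ i = 0"
  by (auto simp: dphi2_nth phi2_def pd_coord zero_fun_def)

lemma dphi1_Y_nth: "i \<le> 0 \<Longrightarrow> dphi1 Y $$ i = (if i = 0 then - 1 else 0)"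
  by (auto simp: dphi1_nth phi1_def pd_minus_Y pd_coord zero_fun_def fun_Compl_def)

lemma dphi2_X_nth: "i \<le> 0 \<Longrightarrow> dphi2 X $$ i = (if i = 0 then 1 else 0)"
  by (auto simp: dphi2_nth phi2_def pd_coord zero_fun_def one_fun_def)

text \<open>The Jacobian is \<open>1\<close> plus negative powers of \<open>\<lambda>\<close>, and the hierarchy kills the latter.\<close>

lemma wedge_X_Y: "wedge X Y = 1"
proof (rule fls_eqI)
  fix n :: int
  show "wedge X Y $$ n = 1 $$ n"
  proof (cases "n > 0")
    case True
    then show ?thesis
      using hierarchy_fls[of X Y n] by (simp add: valid_var_def is_z_def)
  next
    case False
    have "(dphi1 X * dphi2 Y) $$ n = (\<Sum>i=1..n-1. dphi1 X $$ i * dphi2 Y $$ (n - i))"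
      by (rule fls_times_nth_bounds) (simp_all add: dphi1_X_nth dphi2_Y_nth)
    moreover have "(dphi1 Y * dphi2 X) $$ n = (\<Sum>i=0..n. dphi1 Y $$ i * dphi2 X $$ (n - i))"
      using fls_times_nth_bounds[of 0 "dphi1 Y" 0 "dphi2 X" n] by (simp add: dphi1_Y_nth dphi2_X_nth)
    ultimately show ?thesis
      using False by (cases "n = 0") (simp_all add: wedge_def dphi1_Y_nth dphi2_X_nth fun_eq_iff)
  qed
qed

lemma wedge_no_positive_powers:
  assumes "valid_var a" "valid_var b" "\<not> (is_z a \<and> is_z b)" "n > 0"
  shows "((if is_z a \<or> is_z b then fls_X_inv else 1) * wedge a b) $$ n = 0"
  using hierarchy_fls[OF assms(1,2,4)] assms(3) by (auto simp: fls_X_inv_times_conv_shift(1))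

text \<open>The field \<open>c (\<partial>_w - a \<partial>_x - b \<partial>_y)\<close>, where by Cramer's rule and \<open>wedge X Y = 1\<close> the
  coefficients \<open>a, b\<close> solve \<open>\<phi>i_w = a \<phi>i_x + b \<phi>i_y\<close> for \<open>i = 1, 2\<close>.\<close>

definition lax_field :: "fn fls \<Rightarrow> var \<Rightarrow> var \<Rightarrow> fn fls" where
  "lax_field c w u =
     (if u = w then c
      else if u = X then - (c * wedge w Y)
      else if u = Y then - (c * wedge X w)
      else 0)"

lemma Tvf_lax_field:
  assumes "n \<ge> 1"
  shows "Tvf g f n = (\<lambda>u. ser_of_fls (lax_field 1 (T n) u))"
proof -
  have valid: "valid_var (T n)" "valid_var X" "valid_var Y" "\<not> is_z (T n)" "\<not> is_z X" "\<not> is_z Y"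
    using assms by (simp_all add: valid_var_def is_z_def)
  have "pos_part (ser_of_fls (wedge (T n) Y)) = ser_of_fls (wedge (T n) Y)"
    "pos_part (ser_of_fls (wedge X (T n))) = ser_of_fls (wedge X (T n))"
    using wedge_no_positive_powers[of "T n" Y] wedge_no_positive_powers[of X "T n"] valid
    by (simp_all add: pos_part_ser_of_fls)
  moreover have
    "sdet (spd (T n) (phi1 g)) (spd (T n) (phi2 f)) (spd Y (phi1 g)) (spd Y (phi2 f)) =
       ser_of_fls (wedge (T n) Y)"
    "sdet (spd (T n) (phi2 f)) (spd (T n) (phi1 g)) (spd X (phi2 f)) (spd X (phi1 g)) =
       ser_of_fls (wedge X (T n))"
    by (simp_all only: sdet_def spd_phi1 spd_phi2 smult_ser_of_fls ssub_ser_of_fls wedge_def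
        mult.commute)
  ultimately show ?thesis
    by (auto simp: Tvf_def Let_def lax_field_def sneg_ser_of_fls one_ser_eq zero_ser_eq)
qed

lemma Zvf_lax_field:
  assumes "j \<ge> 1"
  shows "Zvf g f j = (\<lambda>u. ser_of_fls (lax_field fls_X_inv (Z j) u))"
proof -
  have valid: "valid_var (Z j)" "valid_var X" "valid_var Y" "is_z (Z j)" "\<not> is_z X" "\<not> is_z Y"
    using assms by (simp_all add: valid_var_def is_z_def)
  have "pos_part (ser_of_fls (fls_X_inv * wedge (Z j) Y)) = ser_of_fls (fls_X_inv * wedge (Z j) Y)"
    "pos_part (ser_of_fls (fls_X_inv * wedge X (Z j))) = ser_of_fls (fls_X_inv * wedge X (Z j))"
    using wedge_no_positive_powers[of "Z j" Y] wedge_no_positive_powers[of X "Z j"] valid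
    by (simp_all add: pos_part_ser_of_fls)
  moreover have
    "sdet (lampow 1 (spd (Z j) (phi1 g))) (lampow 1 (spd (Z j) (phi2 f))) (spd Y (phi1 g)) (spd Y (phi2 f)) =
       ser_of_fls (fls_X_inv * wedge (Z j) Y)"
    "sdet (lampow 1 (spd (Z j) (phi2 f))) (lampow 1 (spd (Z j) (phi1 g))) (spd X (phi2 f)) (spd X (phi1 g)) =
       ser_of_fls (fls_X_inv * wedge X (Z j))"
    by (simp_all add: sdet_def spd_phi1 spd_phi2 lampow_ser_of_fls smult_ser_of_fls ssub_ser_of_fls
        wedge_def fls_X_inv_times_conv_shift(1)[symmetric] algebra_simps)
  moreover have "lampow 1 one_ser = ser_of_fls fls_X_inv"
    by (simp add: one_ser_eq lampow_ser_of_fls fls_X_inv_conv_shift_1)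
  ultimately show ?thesis
    by (auto simp: Zvf_def Let_def lax_field_def sneg_ser_of_fls zero_ser_eq)
qed

lemma lax_field_outside: "u \<notin> {w, X, Y} \<Longrightarrow> lax_field c w u = 0"
  by (simp add: lax_field_def)

lemma coord_algebra_fls_lax_field:
  "coord_algebra_fls coeff_derivatives c \<Longrightarrow> coord_algebra_fls coeff_derivatives (lax_field c w u)"
  unfolding lax_field_def
  by (auto intro: coord_algebra_fls_uminus coord_algebra_fls_mult coord_algebra_fls_wedge coord_algebra_fls_zero)

lemma fls_pd_lax_field: "u \<notin> {X, Y} \<Longrightarrow> fls_pd v c = 0 \<Longrightarrow> fls_pd v (lax_field c w u) = 0"
  by (simp add: lax_field_def)

lemma lax_field_annihilates:
  assumes "w \<notin> {X, Y}" and "finite U" and "{w, X, Y} \<subseteq> U"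
  shows "(\<Sum>u\<in>U. lax_field c w u * dphi1 u) = 0" "(\<Sum>u\<in>U. lax_field c w u * dphi2 u) = 0"
proof -
  have neq: "w \<noteq> X" "w \<noteq> Y" "X \<noteq> w" "Y \<noteq> w"
    using assms(1) by auto
  have sum_eq: "(\<Sum>u\<in>U. lax_field c w u * Q u) = c * (Q w * wedge X Y - wedge w Y * Q X - wedge X w * Q Y)"
    for Q
  proof -
    have "(\<Sum>u\<in>U. lax_field c w u * Q u) = (\<Sum>u\<in>{w, X, Y}. lax_field c w u * Q u)"
      using assms by (intro sum.mono_neutral_right) (auto simp: lax_field_outside)
    then show ?thesis
      using neq by (simp add: lax_field_def wedge_X_Y algebra_simps)
  qed
  show "(\<Sum>u\<in>U. lax_field c w u * dphi1 u) = 0" "(\<Sum>u\<in>U. lax_field c w u * dphi2 u) = 0"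
    unfolding sum_eq by (simp_all add: wedge_def algebra_simps)
qed

lemma vf_app_lax_field:
  assumes "w \<notin> {X, Y}"
  shows "vf_app (\<lambda>u. ser_of_fls (lax_field c w u)) (phi1 g) = zero_ser"
    and "vf_app (\<lambda>u. ser_of_fls (lax_field c w u)) (phi2 f) = zero_ser"
  using lax_field_annihilates[OF assms, of "{w, X, Y}" c]
    vf_app_ser_of_fls[of "{w, X, Y}" "lax_field c w" "phi1 g" dphi1]
    vf_app_ser_of_fls[of "{w, X, Y}" "lax_field c w" "phi2 f" dphi2]
  by (simp_all add: lax_field_outside spd_phi1 spd_phi2 zero_ser_eq)

lemma xy_components_vanish:
  assumes "a * dphi1 X + b * dphi1 Y = 0" and "a * dphi2 X + b * dphi2 Y = 0"
  shows "a = 0 \<and> b = 0"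
proof
  have "a = a * wedge X Y"
    by (simp add: wedge_X_Y)
  also have "\<dots> = (a * dphi1 X + b * dphi1 Y) * dphi2 Y - (a * dphi2 X + b * dphi2 Y) * dphi1 Y"
    by (simp add: wedge_def algebra_simps)
  finally show "a = 0"
    using assms by simp
  have "b = b * wedge X Y"
    by (simp add: wedge_X_Y)
  also have "\<dots> = (a * dphi2 X + b * dphi2 Y) * dphi1 X - (a * dphi1 X + b * dphi1 Y) * dphi2 X"
    by (simp add: wedge_def algebra_simps)
  finally show "b = 0"
    using assms by simp
qed

lemma vf_bracket_lax_field:
  assumes w: "w \<notin> {X, Y}" "w' \<notin> {X, Y}"
    and c: "coord_algebra_fls coeff_derivatives c" "\<And>v. fls_pd v c = 0"
    and c': "coord_algebra_fls coeff_derivatives c'" "\<And>v. fls_pd v c' = 0"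
  shows "vf_bracket (\<lambda>u. ser_of_fls (lax_field c w u)) (\<lambda>u. ser_of_fls (lax_field c' w' u)) = zero_vf"
proof -
  define U where "U = {X, Y, w, w'}"
  define C where "C = fls_bracket U (lax_field c w) (lax_field c' w')"
  have U: "finite U" "{w, X, Y} \<subseteq> U" "{w', X, Y} \<subseteq> U"
    by (auto simp: U_def)
  have C_outside: "C u = 0" if "u \<notin> {X, Y}" for u
    using that by (simp add: C_def fls_bracket_def fls_pd_lax_field c(2) c'(2))
  have xy_sum: "(\<Sum>u\<in>U. C u * Q u) = C X * Q X + C Y * Q Y" for Q
  proof -
    have "(\<Sum>u\<in>U. C u * Q u) = (\<Sum>u\<in>{X, Y}. C u * Q u)"
      using U by (intro sum.mono_neutral_right) (auto simp: U_def C_outside)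
    then show ?thesis by simp
  qed
  have "(\<Sum>u\<in>U. C u * dphi1 u) = 0" "(\<Sum>u\<in>U. C u * dphi2 u) = 0"
    unfolding C_def
    by (intro fls_bracket_annihilates[OF smooth_family_coeff_derivatives U(1)]
        coord_algebra_fls_lax_field c(1) c'(1) coord_algebra_fls_dphi1 coord_algebra_fls_dphi2
        fls_pd_dphi1 fls_pd_dphi2 lax_field_annihilates w U)+
  then have "C X = 0 \<and> C Y = 0"
    unfolding xy_sum by (rule xy_components_vanish)
  then have "C u = 0" for u
    using C_outside by (cases "u \<in> {X, Y}") auto
  moreover have "lax_field c w u = 0" "lax_field c' w' u = 0" if "u \<notin> U" for u
    using that by (simp_all add: U_def lax_field_outside)
  ultimately show ?thesis
    using vf_bracket_ser_of_fls[OF U(1), of "lax_field c w" "lax_field c' w'"]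
    by (simp add: C_def zero_vf_def zero_ser_eq)
qed

end

theorem mainTheorem2:
  fixes g f :: "nat \<Rightarrow> fn"
  assumes smooth_g: "\<And>k. k \<ge> 1 \<Longrightarrow> smooth (g k)"
    and smooth_f: "\<And>m. m \<ge> 1 \<Longrightarrow> smooth (f m)"
    and hier: "DF_hierarchy g f"
  shows "(\<forall>n \<ge> 1. vf_app (Tvf g f n) (phi1 g) = zero_ser \<and> vf_app (Tvf g f n) (phi2 f) = zero_ser)
       \<and> (\<forall>j \<ge> 1. vf_app (Zvf g f j) (phi1 g) = zero_ser \<and> vf_app (Zvf g f j) (phi2 f) = zero_ser)
       \<and> (\<forall>n \<ge> 1. \<forall>s \<ge> 1. vf_bracket (Tvf g f n) (Tvf g f s) = zero_vf)
       \<and> (\<forall>n \<ge> 1. \<forall>j \<ge> 1. vf_bracket (Tvf g f n) (Zvf g f j) = zero_vf)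
       \<and> (\<forall>i \<ge> 1. \<forall>j \<ge> 1. vf_bracket (Zvf g f i) (Zvf g f j) = zero_vf)"
proof -
  interpret DF_solution g f
    using assms by unfold_locales
  have T_not_xy: "T n \<notin> {X, Y}" and Z_not_xy: "Z n \<notin> {X, Y}" for n
    by simp_all
  note one = coord_algebra_fls_one fls_pd_one
  note lambda = coord_algebra_fls_X_inv fls_pd_X_inv
  show ?thesis
    by (simp add: Tvf_lax_field Zvf_lax_field vf_app_lax_field T_not_xy Z_not_xy
        vf_bracket_lax_field[OF T_not_xy T_not_xy one one]
        vf_bracket_lax_field[OF T_not_xy Z_not_xy one lambda]
        vf_bracket_lax_field[OF Z_not_xy Z_not_xy lambda lambda])
qed

end
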